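(* Let $X$ be a perfectly normal space and let $E\subseteq X$ be a subspace which is equiconnected. Suppose $E=\bigcup_{n=1}^\infty E_n$ where: (1) $E_n\cap E_m=\emptyset$ for $n\ne m$; (2) each $E_n$ is an ambiguous set in $E$; (3) each $E_n$ is a $B_1$-retract of $X$; (4) $E$ is a $G_\delta$-set in $X$. Then $E$ is a $B_1$-retract of $X$.
   Context: A function $f:X\to Y$ between topological spaces is a Baire-one function if it is the pointwise limit of a sequence of continuous functions $f_n:X\to Y$. A subset $E$ of $X$ (with the subspace topology) is a $B_1$-retract of $X$ if there exists a Baire-one function $r:X\to E$ with $r(x)=x$ for all $x\in E$. A subset of a topological space is ambiguous if it is simultaneously an $F_\sigma$-set and a $G_\delta$-set. A space is perfectly normal if it is normal and every closed subset is a $G_\delta$-set. A topological space $Y$ is equiconnected if there is a continuous $\gamma:Y\times Y\times[0,1]\to Y$ with $\gamma(y',y'',0)=y'$, $\gamma(y',y'',1)=y''$ and $\gamma(y',y',t)=y'$ for all $y',y''\in Y$, $t\in[0,1]$. *)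

theory Defs
  imports "HOL-Analysis.Analysis"
begin

definition perfectly_normal_space :: "'a topology \<Rightarrow> bool" where
  "perfectly_normal_space X \<equiv> normal_space X \<and> (\<forall>C. closedin X C \<longrightarrow> gdelta_in X C)"

definition ambiguous_in :: "'a topology \<Rightarrow> 'a set \<Rightarrow> bool" where
  "ambiguous_in X A \<equiv> fsigma_in X A \<and> gdelta_in X A"

definition baire_one_map :: "'a topology \<Rightarrow> 'b topology \<Rightarrow> ('a \<Rightarrow> 'b) \<Rightarrow> bool" where
  "baire_one_map X Y f \<equiv>
     \<exists>fs. (\<forall>n. continuous_map X Y (fs n)) \<and>
          (\<forall>x\<in>topspace X. limitin Y (\<lambda>n. fs n x) (f x) sequentially)"

definition B1_retract :: "'a topology \<Rightarrow> 'a set \<Rightarrow> bool" where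
  "B1_retract X E \<equiv> E \<subseteq> topspace X \<and>
     (\<exists>r. baire_one_map X (subtopology X E) r \<and> (\<forall>x\<in>E. r x = x))"

definition equiconnected_space :: "'a topology \<Rightarrow> bool" where
  "equiconnected_space Y \<equiv>
     \<exists>\<gamma> :: 'a \<times> 'a \<times> real \<Rightarrow> 'a.
       continuous_map (prod_topology Y (prod_topology Y (top_of_set {0..1}))) Y \<gamma> \<and>
       (\<forall>a\<in>topspace Y. \<forall>b\<in>topspace Y.
          \<gamma> (a, b, 0) = a \<and> \<gamma> (a, b, 1) = b \<and> (\<forall>t\<in>{0..1}. \<gamma> (a, a, t) = a))"

end

theory Submission
  imports Defs
begin

(* Under the hypotheses of the theorem, the countable union E of the
   B1-retracts E_n is again a B1-retract.  Each piece E_n is F_sigma in E, and E is G_delta in X, so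
   S_n = X - (E - E_n) is F_sigma in X; the S_n cover X and S_n \<inter> E = E_n.
   Refining the cover gives closed sets Z_0, Z_1, ... covering X with
   Z_j \<subseteq> S_(lab j).  Define r(x) = r_(lab j)(x) for the least j with x \<in> Z_j;
   on E this is the identity, since x \<in> Z_j \<inter> E \<subseteq> E_(lab j).

   The heart of the proof is a general gluing principle: in a perfectly normal
   space X, Baire-one maps f_j into an equiconnected space Y, glued along a
   countable closed cover by "first hit", give a Baire-one map.  Its proof
   approximates the first-hit partition by disjoint closed sets C j k
   (increasing in k) and glues the k-th approximants of f_0, ..., f_k on
   C 0 k, ..., C k k into one continuous map, using the equiconnecting map
   together with Urysohn functions. *)

text \<open>Two continuous maps into an equiconnected space can be combined into one
  that agrees with the first on a closed set A and with the second on a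
  disjoint closed set B: interpolate between them along a Urysohn function.\<close>

lemma equiconnected_glue_two:
  fixes X :: "'a topology" and Y :: "'b topology"
  assumes "normal_space X" "equiconnected_space Y"
    and "closedin X A" "closedin X B" "disjnt A B"
    and f: "continuous_map X Y f" and g: "continuous_map X Y g"
  obtains h where "continuous_map X Y h"
    "\<And>x. x \<in> A \<Longrightarrow> h x = f x" "\<And>x. x \<in> B \<Longrightarrow> h x = g x"
proof -
  obtain \<gamma> :: "'b \<times> 'b \<times> real \<Rightarrow> 'b" where
    \<gamma>: "continuous_map (prod_topology Y (prod_topology Y (top_of_set {0..1}))) Y \<gamma>" and
    ends: "\<And>a b. a \<in> topspace Y \<Longrightarrow> b \<in> topspace Y \<Longrightarrow>
             \<gamma> (a, b, 0) = a \<and> \<gamma> (a, b, 1) = b"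
    using assms(2) unfolding equiconnected_space_def by metis
  obtain \<phi> where \<phi>: "continuous_map X (top_of_set {0..1::real}) \<phi>"
    "\<phi> ` A \<subseteq> {0}" "\<phi> ` B \<subseteq> {1}"
    using Urysohn_lemma[OF assms(1,3,4,5), of 0 1] by auto
  define h where "h x = \<gamma> (f x, g x, \<phi> x)" for x
  have "continuous_map X Y h"
    unfolding h_def
    by (rule continuous_map_compose[OF _ \<gamma>, unfolded o_def])
       (intro continuous_map_pairedI f g \<phi>)
  moreover have "f x \<in> topspace Y" "g x \<in> topspace Y" if "x \<in> A \<union> B" for x
    using that assms(3,4) f g closedin_subset continuous_map_image_subset_topspace
    by fastforce+
  ultimately show thesis
    using that \<phi>(2,3) ends unfolding h_def by (fastforce simp: image_subset_iff)
qed

lemma equiconnected_glue_finite: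
  fixes X :: "'a topology" and Y :: "'b topology" and m :: nat
  assumes "normal_space X" "equiconnected_space Y"
    and "\<And>i. i \<le> m \<Longrightarrow> closedin X (A i)"
    and "\<And>i j. i \<le> m \<Longrightarrow> j \<le> m \<Longrightarrow> i \<noteq> j \<Longrightarrow> disjnt (A i) (A j)"
    and "\<And>i. i \<le> m \<Longrightarrow> continuous_map X Y (u i)"
  shows "\<exists>g. continuous_map X Y g \<and> (\<forall>i\<le>m. \<forall>x\<in>A i. g x = u i x)"
  using assms(3-5)
proof (induction m)
  case 0
  then show ?case by (intro exI[of _ "u 0"]) simp
next
  case (Suc m)
  then obtain g where g: "continuous_map X Y g" "\<forall>i\<le>m. \<forall>x\<in>A i. g x = u i x"
    by (metis le_SucI)
  have "closedin X (\<Union>i\<le>m. A i)"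
    using Suc.prems(1) by (intro closedin_Union) auto
  moreover have "disjnt (\<Union>i\<le>m. A i) (A (Suc m))"
    using Suc.prems(2) by (simp add: disjnt_Union1)
  ultimately obtain h where "continuous_map X Y h"
      "\<And>x. x \<in> (\<Union>i\<le>m. A i) \<Longrightarrow> h x = g x"
      "\<And>x. x \<in> A (Suc m) \<Longrightarrow> h x = u (Suc m) x"
    using equiconnected_glue_two[OF assms(1,2) _ Suc.prems(1) _ g(1) Suc.prems(3)] by blast
  then show ?case
    using g(2) by (metis UN_I atMost_iff le_Suc_eq)
qed

lemma perfectly_normal_open_fsigma:
  assumes "perfectly_normal_space X" "openin X U"
  shows "fsigma_in X U"
  using assms openin_subset
  unfolding perfectly_normal_space_def fsigma_in_gdelta_in by blast

lemma first_hit_closed_approximation: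
  fixes X :: "'a topology" and Z :: "nat \<Rightarrow> 'a set"
  assumes "perfectly_normal_space X" "\<And>j. closedin X (Z j)"
  obtains C :: "nat \<Rightarrow> nat \<Rightarrow> 'a set" where
    "\<And>j k. closedin X (C j k)"
    "\<And>i j k. i \<noteq> j \<Longrightarrow> disjnt (C i k) (C j k)"
    "\<And>j x. x \<in> Z j \<Longrightarrow> (\<And>i. i < j \<Longrightarrow> x \<notin> Z i) \<Longrightarrow>
               eventually (\<lambda>k. x \<in> C j k) sequentially"
proof -
  define Fresh where "Fresh j = topspace X - (\<Union>i<j. Z i)" for j
  have "openin X (Fresh j)" for j
    unfolding Fresh_def using assms(2) by (intro openin_diff closedin_Union) auto
  then have "\<forall>j. \<exists>Q. (\<forall>k. closedin X (Q k)) \<and> (\<forall>k. Q k \<subseteq> Q (Suc k)) \<and>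
                  \<Union>(range Q) = Fresh j"
    using perfectly_normal_open_fsigma[OF assms(1)] fsigma_in_ascending by blast
  then obtain Q where Q: "\<And>j k. closedin X (Q j k)" "\<And>j k. Q j k \<subseteq> Q j (Suc k)"
      "\<And>j. \<Union>(range (Q j)) = Fresh j"
    by metis
  define C where "C j k = Z j \<inter> Q j k" for j k
  show thesis
  proof
    show "closedin X (C j k)" for j k
      unfolding C_def using assms(2) Q(1) by blast
    show "disjnt (C i k) (C j k)" if "i \<noteq> j" for i j k
    proof -
      have "disjnt (C a k) (C b k)" if "a < b" for a b
        using that Q(3)[of b] unfolding C_def Fresh_def disjnt_def by blast
      then show ?thesis
        using \<open>i \<noteq> j\<close> by (metis disjnt_sym linorder_neqE_nat)
    qed
    show "eventually (\<lambda>k. x \<in> C j k) sequentially"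
      if x: "x \<in> Z j" and first: "\<And>i. i < j \<Longrightarrow> x \<notin> Z i" for j x
    proof -
      have "x \<in> Fresh j"
        unfolding Fresh_def using x first assms(2) closedin_subset by blast
      then obtain K where "x \<in> Q j K"
        using Q(3)[of j] by blast
      then have "x \<in> Q j k" if "K \<le> k" for k
        using lift_Suc_mono_le[of "Q j", OF Q(2) that] by blast
      then show ?thesis
        unfolding C_def eventually_sequentially using x by blast
    qed
  qed
qed

lemma baire_one_glue_closed_cover:
  fixes X :: "'a topology" and Y :: "'b topology"
    and Z :: "nat \<Rightarrow> 'a set" and f :: "nat \<Rightarrow> 'a \<Rightarrow> 'b"
  assumes pn: "perfectly_normal_space X" and eq: "equiconnected_space Y"
    and Z: "\<And>j. closedin X (Z j)" and cover: "topspace X \<subseteq> (\<Union>j. Z j)"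
    and f: "\<And>j. baire_one_map X Y (f j)"
  shows "baire_one_map X Y (\<lambda>x. f (LEAST j. x \<in> Z j) x)"
proof -
  have "\<forall>j. \<exists>Fj. (\<forall>k. continuous_map X Y (Fj k)) \<and>
               (\<forall>x\<in>topspace X. limitin Y (\<lambda>k. Fj k x) (f j x) sequentially)"
    using f unfolding baire_one_map_def by blast
  from choice[OF this] obtain F where
    F: "\<forall>j. (\<forall>k. continuous_map X Y (F j k)) \<and>
             (\<forall>x\<in>topspace X. limitin Y (\<lambda>k. F j k x) (f j x) sequentially)"
    by blast
  obtain C where C: "\<And>j k. closedin X (C j k)"
    "\<And>i j k. i \<noteq> j \<Longrightarrow> disjnt (C i k) (C j k)"
    "\<And>j x. x \<in> Z j \<Longrightarrow> (\<And>i. i < j \<Longrightarrow> x \<notin> Z i) \<Longrightarrow>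
               eventually (\<lambda>k. x \<in> C j k) sequentially"
    using first_hit_closed_approximation[where Z = Z, OF pn Z] by blast
  have nX: "normal_space X"
    using pn unfolding perfectly_normal_space_def by blast
  have "\<forall>k. \<exists>g. continuous_map X Y g \<and> (\<forall>i\<le>k. \<forall>x\<in>C i k. g x = F i k x)"
  proof
    fix k
    show "\<exists>g. continuous_map X Y g \<and> (\<forall>i\<le>k. \<forall>x\<in>C i k. g x = F i k x)"
      by (rule equiconnected_glue_finite[OF nX eq]) (use C(1,2) F in auto)
  qed
  from choice[OF this] obtain g where
    g: "\<forall>k. continuous_map X Y (g k) \<and> (\<forall>i\<le>k. \<forall>x\<in>C i k. g k x = F i k x)"
    by blast
  have "limitin Y (\<lambda>k. g k x) (f (LEAST j. x \<in> Z j) x) sequentially"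
    if x: "x \<in> topspace X" for x
  proof -
    define j where "j = (LEAST j. x \<in> Z j)"
    obtain j0 where "x \<in> Z j0"
      using cover x by blast
    then have "x \<in> Z j"
      unfolding j_def by (rule LeastI)
    moreover have "\<And>i. i < j \<Longrightarrow> x \<notin> Z i"
      unfolding j_def by (rule not_less_Least)
    ultimately have "eventually (\<lambda>k. x \<in> C j k) sequentially"
      by (rule C(3))
    moreover have "eventually (\<lambda>k. j \<le> k) sequentially"
      by (rule eventually_ge_at_top)
    ultimately have "eventually (\<lambda>k. F j k x = g k x) sequentially"
      by eventually_elim (use g in auto)
    moreover have "limitin Y (\<lambda>k. F j k x) (f j x) sequentially"
      using F x by blast
    ultimately have "limitin Y (\<lambda>k. g k x) (f j x) sequentially"
      by (rule limitin_transform_eventually)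
    then show ?thesis
      by (simp add: j_def)
  qed
  then show ?thesis
    unfolding baire_one_map_def using g by blast
qed

lemma baire_one_map_subtopology_mono:
  assumes "baire_one_map X (subtopology Y A) f" "A \<subseteq> B"
  shows "baire_one_map X (subtopology Y B) f"
proof -
  obtain fs where fs: "\<And>n. continuous_map X (subtopology Y A) (fs n)"
    "\<And>x. x \<in> topspace X \<Longrightarrow> limitin (subtopology Y A) (\<lambda>n. fs n x) (f x) sequentially"
    using assms(1) unfolding baire_one_map_def by blast
  have "continuous_map X (subtopology Y B) (fs n)" for n
    using fs(1)[of n] assms(2) unfolding continuous_map_in_subtopology by blast
  moreover have "limitin (subtopology Y B) (\<lambda>n. fs n x) (f x) sequentially"
    if "x \<in> topspace X" for x
    using fs(2)[OF that] assms(2) unfolding limitin_subtopology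
    by (auto elim: eventually_mono)
  ultimately show ?thesis
    unfolding baire_one_map_def by blast
qed

text \<open>If E is G_delta in X and A is F_sigma in E, then X - (E - A) is F_sigma
  in X: its complement E - A is G_delta in E, hence in X.\<close>

lemma fsigma_in_complement_of_relative_complement:
  assumes "gdelta_in X E" "fsigma_in (subtopology X E) A"
  shows "fsigma_in X (topspace X - (E - A))"
proof -
  have "topspace (subtopology X E) = E"
    using gdelta_in_subset[OF assms(1)] by auto
  then have "gdelta_in (subtopology X E) (E - A)"
    using assms(2) unfolding fsigma_in_gdelta_in by simp
  then have "gdelta_in X (E - A)"
    using gdelta_in_gdelta_subtopology[OF assms(1)] by blast
  moreover have "topspace X - (topspace X - (E - A)) = E - A"
    using gdelta_in_subset[OF assms(1)] by blast
  ultimately show ?thesis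
    unfolding fsigma_in_gdelta_in by simp
qed

lemma fsigma_cover_closed_refinement:
  fixes X :: "'a topology" and S :: "nat \<Rightarrow> 'a set"
  assumes "\<And>n. fsigma_in X (S n)" "topspace X \<subseteq> (\<Union>n. S n)"
  obtains Z :: "nat \<Rightarrow> 'a set" and lab :: "nat \<Rightarrow> nat" where
    "\<And>j. closedin X (Z j)" "\<And>j. Z j \<subseteq> S (lab j)" "topspace X \<subseteq> (\<Union>j. Z j)"
proof -
  have "\<forall>n. \<exists>Dn :: nat \<Rightarrow> 'a set.
          (\<forall>k. closedin X (Dn k)) \<and> (\<Union>k. Dn k) = S n"
    using assms(1) unfolding fsigma_in_ascending by blast
  from choice[OF this] obtain D :: "nat \<Rightarrow> nat \<Rightarrow> 'a set"
    where D: "\<forall>n. (\<forall>k. closedin X (D n k)) \<and> (\<Union>k. D n k) = S n"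
    by blast
  define Z where "Z j = D (fst (prod_decode j)) (snd (prod_decode j))" for j
  show thesis
  proof
    show "closedin X (Z j)" for j
      unfolding Z_def using D by blast
    show "Z j \<subseteq> S (fst (prod_decode j))" for j
      unfolding Z_def using D by blast
    show "topspace X \<subseteq> (\<Union>j. Z j)"
    proof
      fix x assume "x \<in> topspace X"
      then obtain n where "x \<in> S n"
        using assms(2) by blast
      then obtain k where "x \<in> D n k"
        using D by blast
      then have "x \<in> Z (prod_encode (n, k))"
        unfolding Z_def by simp
      then show "x \<in> (\<Union>j. Z j)"
        by blast
    qed
  qed
qed

theorem theorem2p6:
  fixes X :: "'a topology" and E :: "'a set" and En :: "nat \<Rightarrow> 'a set"
  assumes "perfectly_normal_space X"
    and "E \<subseteq> topspace X"
    and "equiconnected_space (subtopology X E)"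
    and "E = (\<Union>n. En n)"
    and "\<And>n m. n \<noteq> m \<Longrightarrow> En n \<inter> En m = {}"
    and "\<And>n. ambiguous_in (subtopology X E) (En n)"
    and "\<And>n. B1_retract X (En n)"
    and "gdelta_in X E"
  shows "B1_retract X E"
proof -
  have "\<forall>n. \<exists>R. baire_one_map X (subtopology X E) R \<and> (\<forall>x\<in>En n. R x = x)"
  proof
    fix n
    obtain R where R: "baire_one_map X (subtopology X (En n)) R" "\<forall>x\<in>En n. R x = x"
      using assms(7) unfolding B1_retract_def by blast
    have "En n \<subseteq> E"
      using assms(4) by blast
    with R show "\<exists>R. baire_one_map X (subtopology X E) R \<and> (\<forall>x\<in>En n. R x = x)"
      using baire_one_map_subtopology_mono[of X X "En n" R E] by blast
  qed
  from choice[OF this] obtain R :: "nat \<Rightarrow> 'a \<Rightarrow> 'a" where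
    R: "\<forall>n. baire_one_map X (subtopology X E) (R n) \<and> (\<forall>x\<in>En n. R n x = x)"
    by blast
  define S where "S n = topspace X - (E - En n)" for n
  have "fsigma_in X (S n)" for n
    unfolding S_def using assms(6) ambiguous_in_def
    by (blast intro: fsigma_in_complement_of_relative_complement[OF assms(8)])
  moreover have "topspace X \<subseteq> (\<Union>n. S n)"
    unfolding S_def using assms(4) by blast
  ultimately obtain Z :: "nat \<Rightarrow> 'a set" and lab :: "nat \<Rightarrow> nat"
    where Z: "\<And>j. closedin X (Z j)" "\<And>j. Z j \<subseteq> S (lab j)"
      "topspace X \<subseteq> (\<Union>j. Z j)"
    using fsigma_cover_closed_refinement[of X S] by blast
  define r where "r x = R (lab (LEAST j. x \<in> Z j)) x" for x
  have "baire_one_map X (subtopology X E) r"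
    unfolding r_def
    by (rule baire_one_glue_closed_cover
          [where Z = Z and f = "\<lambda>j. R (lab j)", OF assms(1,3) Z(1,3)])
       (use R in blast)
  moreover have "r x = x" if x: "x \<in> E" for x
  proof -
    obtain j0 where "x \<in> Z j0"
      using Z(3) assms(2) x by blast
    then have "x \<in> Z (LEAST j. x \<in> Z j)"
      by (rule LeastI)
    then have "x \<in> En (lab (LEAST j. x \<in> Z j))"
      using Z(2) x unfolding S_def by blast
    then show ?thesis
      unfolding r_def using R by blast
  qed
  ultimately show ?thesis
    unfolding B1_retract_def using assms(2) by blast
qed

end
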